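(* Let $d\ge 7$ and let $G$ be a $d$-regular graph with girth $5$. Suppose there exists a vertex $x\in V(G)$, with neighbors $x_1,\dots,x_d$, and two distinct indices $i\ne j$ in $[d]$ such that every neighbor of every vertex of $X_i\cup X_j$ lies in $N_2(x)$ (equivalently, no vertex of $X_i\cup X_j$ has a neighbor at distance $3$ from $x$). Then $\chi_b(G)=d+1$.
   Context: $X_t=N(x_t)\setminus\{x\}$ is the $t$-th bunch of $x$. $N_2(x)=N(x)\cup S_2(x)$, where $S_2(x)$ is the set of vertices at distance exactly $2$ from $x$. A proper $k$-coloring is a b-coloring if every color class contains a vertex whose closed neighborhood contains all $k$ colors; $\chi_b(G)$ is the largest $k$ for which $G$ has a b-coloring with $k$ colors. *)

theory Defs
  imports Main "HOL-Library.Extended_Nat"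
begin

definition simple_graph :: "'a set \<Rightarrow> ('a \<Rightarrow> 'a \<Rightarrow> bool) \<Rightarrow> bool" where
  "simple_graph V E \<longleftrightarrow> finite V \<and> (\<forall>u v. E u v \<longrightarrow> u \<in> V \<and> v \<in> V)
     \<and> (\<forall>u v. E u v \<longrightarrow> E v u) \<and> (\<forall>v. \<not> E v v)"

definition nbhd :: "'a set \<Rightarrow> ('a \<Rightarrow> 'a \<Rightarrow> bool) \<Rightarrow> 'a \<Rightarrow> 'a set" where
  "nbhd V E v = {u \<in> V. E v u}"

definition regular :: "'a set \<Rightarrow> ('a \<Rightarrow> 'a \<Rightarrow> bool) \<Rightarrow> nat \<Rightarrow> bool" where
  "regular V E d \<longleftrightarrow> (\<forall>v\<in>V. card (nbhd V E v) = d)"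

definition is_cycle :: "'a set \<Rightarrow> ('a \<Rightarrow> 'a \<Rightarrow> bool) \<Rightarrow> 'a list \<Rightarrow> bool" where
  "is_cycle V E cs \<longleftrightarrow> length cs \<ge> 3 \<and> distinct cs \<and> set cs \<subseteq> V
     \<and> (\<forall>i < length cs. E (cs ! i) (cs ! ((i + 1) mod length cs)))"

definition girth :: "'a set \<Rightarrow> ('a \<Rightarrow> 'a \<Rightarrow> bool) \<Rightarrow> enat" where
  "girth V E = (INF cs \<in> {cs. is_cycle V E cs}. enat (length cs))"

definition S2 :: "'a set \<Rightarrow> ('a \<Rightarrow> 'a \<Rightarrow> bool) \<Rightarrow> 'a \<Rightarrow> 'a set" where
  "S2 V E x = {v \<in> V. v \<noteq> x \<and> \<not> E x v \<and> (\<exists>w \<in> V. E x w \<and> E w v)}"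

definition N2 :: "'a set \<Rightarrow> ('a \<Rightarrow> 'a \<Rightarrow> bool) \<Rightarrow> 'a \<Rightarrow> 'a set" where
  "N2 V E x = nbhd V E x \<union> S2 V E x"

definition b_coloring :: "'a set \<Rightarrow> ('a \<Rightarrow> 'a \<Rightarrow> bool) \<Rightarrow> nat \<Rightarrow> ('a \<Rightarrow> nat) \<Rightarrow> bool" where
  "b_coloring V E k c \<longleftrightarrow>
     (\<forall>v\<in>V. c v < k) \<and> (\<forall>u\<in>V. \<forall>v\<in>V. E u v \<longrightarrow> c u \<noteq> c v)
     \<and> (\<forall>i < k. \<exists>v\<in>V. c v = i \<and>
            (\<forall>j < k. \<exists>u \<in> insert v (nbhd V E v). c u = j))"

definition b_chromatic :: "'a set \<Rightarrow> ('a \<Rightarrow> 'a \<Rightarrow> bool) \<Rightarrow> nat" where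
  "b_chromatic V E = (GREATEST k. \<exists>c. b_coloring V E k c)"

end

(*
  A b-vertex sees all colors in its closed neighborhood, so a d-regular graph has no
  b-coloring with more than d + 1 colors, and any proper coloring of the ball of radius 2
  around x with colors 0..d extends greedily to the whole graph.

  Girth 5 gives every vertex u of S2(x) a unique parent in N(x), and a vertex of S2(x) whose
  neighbors stay in N2(x) has exactly one neighbor in each other bunch. Fix c in X_j and
  its neighbor a0 in X_i; the remaining d - 2 neighbors T of c lie one in each bunch X_y,
  y in D = N(x) - {x_i, x_j}. Number D by e : D -> {0..d-3} and color x with d, x_i with 0,
  x_j with d - 1, y in D with e(y) + 2 taken cyclically in {1..d-2}; a vertex of X_y gets
  e(y) + 1, except that T gets d - 1 and X_j gets d, and a in X_i gets the color e(y) + 1 of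
  its unique T-neighbor in some X_y, or d - 1 if it has none. Since X_i dominates S2(x) - X_i,
  the colors of X_i are exactly 1..d-1, and x, x_i and every vertex of X_i are b-vertices.
  The argument only needs d >= 4.
*)
theory Submission
  imports Defs
begin

locale regular_graph =
  fixes V :: "'a set" and E :: "'a \<Rightarrow> 'a \<Rightarrow> bool" and d :: nat
  assumes simple: "simple_graph V E" and regular: "regular V E d"
begin

lemma adj_sym: "E u v \<Longrightarrow> E v u"
  using simple unfolding simple_graph_def by metis

lemma adj_irrefl: "\<not> E v v"
  using simple unfolding simple_graph_def by metis

lemma adj_in_V: "E u v \<Longrightarrow> u \<in> V" "E u v \<Longrightarrow> v \<in> V"
  using simple unfolding simple_graph_def by metis+

lemma finite_V: "finite V"
  using simple unfolding simple_graph_def by metis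

lemma in_nbhd_iff: "u \<in> nbhd V E v \<longleftrightarrow> E v u"
  unfolding nbhd_def using adj_in_V by auto

lemma finite_nbhd: "finite (nbhd V E v)"
  using finite_V unfolding nbhd_def by auto

lemma nbhd_subset_V: "nbhd V E v \<subseteq> V"
  unfolding nbhd_def by auto

lemma card_nbhd: "v \<in> V \<Longrightarrow> card (nbhd V E v) = d"
  using regular unfolding regular_def by auto

lemma card_nbhd_le: "card (nbhd V E v) \<le> d"
proof (cases "v \<in> V")
  case False
  then have "nbhd V E v = {}" using adj_in_V in_nbhd_iff by blast
  then show ?thesis by simp
qed (simp add: card_nbhd)

lemma free_color: "\<exists>k < Suc d. k \<notin> c ` nbhd V E v"
proof -
  have "\<not> {0..<Suc d} \<subseteq> c ` nbhd V E v"
  proof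
    assume "{0..<Suc d} \<subseteq> c ` nbhd V E v"
    then have "Suc d \<le> card (c ` nbhd V E v)"
      using card_mono[OF finite_imageI[OF finite_nbhd]] by fastforce
    moreover have "card (c ` nbhd V E v) \<le> d"
      using card_image_le[OF finite_nbhd] card_nbhd_le[of v] by (rule le_trans)
    ultimately show False by simp
  qed
  then show ?thesis by auto
qed

lemma proper_coloring_extends:
  assumes "P \<subseteq> V" and "\<forall>v\<in>P. \<kappa> v < Suc d"
    and "\<forall>u\<in>P. \<forall>v\<in>P. E u v \<longrightarrow> \<kappa> u \<noteq> \<kappa> v"
  shows "\<exists>c. (\<forall>v\<in>V. c v < Suc d) \<and> (\<forall>u\<in>V. \<forall>v\<in>V. E u v \<longrightarrow> c u \<noteq> c v) \<and> (\<forall>v\<in>P. c v = \<kappa> v)"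
proof -
  have "\<exists>c. (\<forall>v\<in>P \<union> Q. c v < Suc d) \<and> (\<forall>u\<in>P \<union> Q. \<forall>v\<in>P \<union> Q. E u v \<longrightarrow> c u \<noteq> c v)
           \<and> (\<forall>v\<in>P. c v = \<kappa> v)" if "finite Q" for Q
    using that
  proof (induction Q rule: finite_induct)
    case empty
    then show ?case using assms(2,3) by (intro exI[of _ \<kappa>]) auto
  next
    case (insert v Q)
    then obtain c where c: "\<forall>v\<in>P \<union> Q. c v < Suc d"
      "\<forall>u\<in>P \<union> Q. \<forall>v\<in>P \<union> Q. E u v \<longrightarrow> c u \<noteq> c v" "\<forall>v\<in>P. c v = \<kappa> v"
      by blast
    show ?case
    proof (cases "v \<in> P")
      case True
      then show ?thesis using c by (intro exI[of _ c]) (simp add: insert_absorb)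
    next
      case False
      obtain k where k: "k < Suc d" "k \<notin> c ` nbhd V E v" using free_color by blast
      have seen: "c u \<in> c ` nbhd V E v" if "E u v \<or> E v u" for u
        using that adj_sym by (auto simp: in_nbhd_iff)
      define c' where "c' = c(v := k)"
      have "c' u \<noteq> c' w" if "u \<in> P \<union> insert v Q" "w \<in> P \<union> insert v Q" "E u w" for u w
      proof (cases "u = v \<or> w = v")
        case True
        with \<open>E u w\<close> adj_irrefl have "u \<noteq> w" by blast
        with True \<open>E u w\<close> k seen show ?thesis unfolding c'_def by fastforce
      qed (use that c(2) in \<open>auto simp: c'_def\<close>)
      moreover have "\<forall>w\<in>P \<union> insert v Q. c' w < Suc d" "\<forall>w\<in>P. c' w = \<kappa> w"
        using c(1,3) k(1) False unfolding c'_def by auto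
      ultimately show ?thesis by blast
    qed
  qed
  from this[OF finite_V] show ?thesis using assms(1) by (simp add: Un_absorb1)
qed

lemma b_coloring_le:
  assumes "b_coloring V E k c" shows "k \<le> Suc d"
proof (cases "k = 0")
  case False
  then obtain v where "v \<in> V" "\<forall>j<k. \<exists>u\<in>insert v (nbhd V E v). c u = j"
    using assms unfolding b_coloring_def by blast
  then have sub: "{0..<k} \<subseteq> c ` insert v (nbhd V E v)" by fastforce
  have fin: "finite (insert v (nbhd V E v))" by (simp add: finite_nbhd)
  have "k \<le> card (c ` insert v (nbhd V E v))"
    using card_mono[OF finite_imageI[OF fin] sub] by simp
  also have "\<dots> \<le> card (insert v (nbhd V E v))" using card_image_le[OF fin] .
  also have "\<dots> \<le> Suc d" using card_nbhd_le[of v] by (simp add: card_insert_if finite_nbhd)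
  finally show ?thesis .
qed simp

lemma b_chromatic_eq_Suc:
  assumes "b_coloring V E (Suc d) c" shows "b_chromatic V E = Suc d"
  unfolding b_chromatic_def
proof (rule Greatest_equality)
  show "\<exists>c. b_coloring V E (Suc d) c" using assms by blast
qed (use b_coloring_le in blast)

end

locale girth5_regular_graph = regular_graph +
  assumes girth_ge_5: "5 \<le> girth V E"
begin

lemma cycle_length_ge_5:
  assumes "is_cycle V E cs" shows "5 \<le> length cs"
proof -
  have "girth V E \<le> enat (length cs)"
    unfolding girth_def by (rule INF_lower) (use assms in auto)
  with girth_ge_5 have "enat 5 \<le> enat (length cs)" by (metis numeral_eq_enat order_trans)
  then show ?thesis by simp
qed

lemma no_triangle: "E a b \<Longrightarrow> E b c \<Longrightarrow> E a c \<Longrightarrow> False"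
proof -
  assume adj: "E a b" "E b c" "E a c"
  have "is_cycle V E [a, b, c]"
    unfolding is_cycle_def
  proof (intro conjI allI impI)
    fix i assume "i < length [a, b, c]"
    then have "i = 0 \<or> i = 1 \<or> i = 2" by auto
    then show "E ([a, b, c] ! i) ([a, b, c] ! ((i + 1) mod length [a, b, c]))"
      using adj adj_sym by auto
  qed (use adj adj_irrefl adj_in_V in auto)
  then show False using cycle_length_ge_5 by fastforce
qed

lemma no_4_cycle:
  "u \<noteq> v \<Longrightarrow> w \<noteq> w' \<Longrightarrow> E u w \<Longrightarrow> E w v \<Longrightarrow> E u w' \<Longrightarrow> E w' v \<Longrightarrow> False"
proof -
  assume ne: "u \<noteq> v" "w \<noteq> w'" and adj: "E u w" "E w v" "E u w'" "E w' v"
  have "is_cycle V E [u, w, v, w']"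
    unfolding is_cycle_def
  proof (intro conjI allI impI)
    fix i assume "i < length [u, w, v, w']"
    then have "i = 0 \<or> i = 1 \<or> i = 2 \<or> i = 3" by auto
    then show "E ([u, w, v, w'] ! i) ([u, w, v, w'] ! ((i + 1) mod length [u, w, v, w']))"
      using adj adj_sym by auto
  qed (use ne adj adj_irrefl adj_in_V in auto)
  then show False using cycle_length_ge_5 by fastforce
qed

end

locale rooted_girth5_graph = girth5_regular_graph +
  fixes x :: 'a
  assumes root_in_V: "x \<in> V"
begin

definition N :: "'a set" where "N = nbhd V E x"

definition S :: "'a set" where "S = S2 V E x"

definition parent :: "'a \<Rightarrow> 'a" where "parent u = (THE y. y \<in> N \<and> E y u)"

definition bunch :: "'a \<Rightarrow> 'a set" where "bunch y = nbhd V E y - {x}"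

lemma N2_eq: "N2 V E x = N \<union> S"
  unfolding N2_def N_def S_def ..

lemma mem_N_iff: "y \<in> N \<longleftrightarrow> E x y"
  unfolding N_def using in_nbhd_iff by simp

lemma mem_S_iff: "u \<in> S \<longleftrightarrow> u \<in> V \<and> u \<noteq> x \<and> \<not> E x u \<and> (\<exists>y. E x y \<and> E y u)"
  unfolding S_def S2_def using adj_in_V by auto

lemma N_not_S: "y \<in> N \<Longrightarrow> y \<notin> S"
  using mem_N_iff mem_S_iff by auto

lemma root_not_N: "x \<notin> N"
  using mem_N_iff adj_irrefl by auto

lemma S_ne_root: "u \<in> S \<Longrightarrow> u \<noteq> x"
  using mem_S_iff by auto

lemma finite_N: "finite N"
  unfolding N_def using finite_nbhd .

lemma card_N: "card N = d"
  unfolding N_def using card_nbhd root_in_V by simp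

lemma N_subset_V: "N \<subseteq> V" and S_subset_V: "S \<subseteq> V"
  using nbhd_subset_V mem_S_iff unfolding N_def by auto

lemma parent_eqI:
  assumes "u \<in> S" "y \<in> N" "E y u" shows "parent u = y"
  unfolding parent_def
proof (rule the_equality)
  fix y' assume "y' \<in> N \<and> E y' u"
  then show "y' = y"
    using no_4_cycle[of x u y' y] assms S_ne_root mem_N_iff by blast
qed (use assms in blast)

lemma parent_in_N: "u \<in> S \<Longrightarrow> parent u \<in> N" and adj_parent: "u \<in> S \<Longrightarrow> E (parent u) u"
proof -
  assume "u \<in> S"
  then obtain y where "y \<in> N" "E y u" using mem_S_iff mem_N_iff by blast
  with \<open>u \<in> S\<close> show "parent u \<in> N" "E (parent u) u" using parent_eqI by simp_all
qed

lemma adj_N_in_S: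
  assumes "y \<in> N" "E y u" "u \<noteq> x" shows "u \<in> S" "parent u = y"
proof -
  have "\<not> E x u" using assms no_triangle mem_N_iff by blast
  then show "u \<in> S" unfolding mem_S_iff using assms mem_N_iff adj_in_V by blast
  then show "parent u = y" using parent_eqI assms by blast
qed

lemma mem_bunch_iff:
  assumes "y \<in> N" shows "u \<in> bunch y \<longleftrightarrow> u \<in> S \<and> parent u = y"
proof
  assume "u \<in> bunch y"
  then show "u \<in> S \<and> parent u = y" using adj_N_in_S[OF assms] by (simp add: bunch_def in_nbhd_iff)
next
  assume "u \<in> S \<and> parent u = y"
  then show "u \<in> bunch y" using adj_parent S_ne_root by (auto simp: bunch_def in_nbhd_iff)
qed

lemma card_bunch:
  assumes "y \<in> N" shows "card (bunch y) = d - 1"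
proof -
  have "x \<in> nbhd V E y" "card (nbhd V E y) = d"
    using assms mem_N_iff in_nbhd_iff adj_sym card_nbhd adj_in_V by auto
  then show ?thesis unfolding bunch_def by (simp add: finite_nbhd)
qed

text \<open>The \<open>d - 1\<close> neighbors of \<open>a\<close> other than its parent lie in \<open>S\<close> and in distinct bunches
  (no \<open>C\<^sub>4\<close>), none in the bunch of \<open>a\<close> (no triangle), so by counting they meet every other bunch.\<close>

lemma closed_vertex_meets_bunch:
  assumes a: "a \<in> S" and closed: "nbhd V E a \<subseteq> N2 V E x" and y: "y \<in> N" "y \<noteq> parent a"
  shows "\<exists>u\<in>S. E a u \<and> parent u = y"
proof -
  define p where "p = parent a"
  have p: "p \<in> N" "E p a" using parent_in_N adj_parent a unfolding p_def by auto
  define A where "A = nbhd V E a - {p}"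
  have A_S: "u \<in> S" "parent u \<noteq> p" if "u \<in> A" for u
  proof -
    have u: "E a u" "u \<noteq> p" using that unfolding A_def by (auto simp: in_nbhd_iff)
    have "u \<notin> N"
    proof
      assume "u \<in> N"
      then have "E x u" "E x p" using p mem_N_iff by auto
      then show False using no_4_cycle[of a x p u] u p S_ne_root[OF a] adj_sym by blast
    qed
    then show "u \<in> S" using closed u(1) N2_eq by (auto simp: in_nbhd_iff)
    show "parent u \<noteq> p"
    proof
      assume "parent u = p"
      then have "E p u" using adj_parent \<open>u \<in> S\<close> by metis
      then show False using no_triangle[of a u p] u(1) p(2) adj_sym by blast
    qed
  qed
  have "inj_on parent A"
  proof (rule inj_onI)
    fix u1 u2 assume u: "u1 \<in> A" "u2 \<in> A" "parent u1 = parent u2"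
    have "a \<noteq> parent u1" using a A_S(1)[OF u(1)] parent_in_N N_not_S by metis
    moreover have "E a u1" "E a u2" using u(1,2) unfolding A_def by (auto simp: in_nbhd_iff)
    moreover have "E u1 (parent u1)" "E u2 (parent u1)"
      using adj_parent A_S(1) u adj_sym by metis+
    ultimately show "u1 = u2" using no_4_cycle[of a "parent u1" u1 u2] by blast
  qed
  moreover have "parent ` A \<subseteq> N - {p}" using A_S parent_in_N by blast
  moreover have "card A = d - 1"
  proof -
    have "p \<in> nbhd V E a" using p(2) adj_sym by (simp add: in_nbhd_iff)
    moreover have "card (nbhd V E a) = d" using card_nbhd a S_subset_V by blast
    ultimately show ?thesis unfolding A_def by (simp add: finite_nbhd)
  qed
  moreover have "card (N - {p}) = d - 1" using card_N p(1) finite_N by simp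
  ultimately have "parent ` A = N - {p}"
    using card_subset_eq[of "N - {p}" "parent ` A"] finite_N card_image by fastforce
  moreover have "y \<in> N - {p}" using y unfolding p_def by simp
  ultimately obtain u where "u \<in> A" "parent u = y" by (metis imageE)
  then show ?thesis using A_S(1) unfolding A_def by (auto simp: in_nbhd_iff)
qed

text \<open>Each \<open>a\<close> in the bunch of \<open>y\<close> has a neighbor in the bunch of \<open>parent u\<close>; these neighbors
  are distinct (no \<open>C\<^sub>4\<close>), so by counting they exhaust that bunch.\<close>

lemma closed_bunch_dominates:
  assumes y: "y \<in> N" and closed: "\<forall>a\<in>bunch y. nbhd V E a \<subseteq> N2 V E x"
    and u: "u \<in> S" "parent u \<noteq> y"
  shows "\<exists>a\<in>bunch y. E a u"
proof -
  define p where "p = parent u"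
  have p: "p \<in> N" using parent_in_N u unfolding p_def by simp
  define g where "g a = (SOME w. w \<in> S \<and> E a w \<and> parent w = p)" for a
  have g: "g a \<in> S \<and> E a (g a) \<and> parent (g a) = p" if "a \<in> bunch y" for a
    unfolding g_def
  proof (rule someI_ex)
    show "\<exists>w. w \<in> S \<and> E a w \<and> parent w = p"
      using closed_vertex_meets_bunch[of a p] that closed mem_bunch_iff[OF y] p u
      unfolding p_def by auto
  qed
  have "inj_on g (bunch y)"
  proof (rule inj_onI)
    fix a1 a2 assume a: "a1 \<in> bunch y" "a2 \<in> bunch y" "g a1 = g a2"
    have "y \<noteq> g a1" using g a N_not_S y by metis
    moreover have "E y a1" "E y a2" using a mem_bunch_iff[OF y] adj_parent by metis+
    ultimately show "a1 = a2"
      using no_4_cycle[of y "g a1" a1 a2] a g adj_sym by metis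
  qed
  moreover have "g ` bunch y \<subseteq> bunch p" using g mem_bunch_iff[OF p] by blast
  moreover have "card (bunch y) = card (bunch p)" using card_bunch y p by simp
  moreover have "finite (bunch p)" unfolding bunch_def using finite_nbhd by simp
  ultimately have "g ` bunch y = bunch p" using card_image card_subset_eq by (metis (no_types))
  moreover have "u \<in> bunch p" using mem_bunch_iff[OF p] u unfolding p_def by simp
  ultimately obtain a where "a \<in> bunch y" "u = g a" by blast
  then show ?thesis using g by blast
qed

end

locale b_coloring_construction = rooted_girth5_graph +
  fixes xi xj c a0 :: 'a and e :: "'a \<Rightarrow> nat"
  assumes d_ge_4: "4 \<le> d"
    and xi_in_N: "xi \<in> N" and xj_in_N: "xj \<in> N" and xi_ne_xj: "xi \<noteq> xj"
    and bunch_xi_closed: "\<forall>a\<in>bunch xi. nbhd V E a \<subseteq> N2 V E x"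
    and c_closed: "nbhd V E c \<subseteq> N2 V E x"
    and c_in_bunch: "c \<in> bunch xj" and a0_in_bunch: "a0 \<in> bunch xi" and adj_a0_c: "E a0 c"
    and e_bij: "bij_betw e (N - {xi, xj}) {0..<d - 2}"
begin

definition D :: "'a set" where "D = N - {xi, xj}"

definition T :: "'a set" where "T = nbhd V E c - {xj, a0}"

text \<open>Vertex \<open>y \<in> D\<close> is colored \<open>e y + 2\<close> cyclically in \<open>{1..d-2}\<close>, so that it avoids the
  color \<open>e y + 1\<close> given to its bunch.\<close>

definition N_color :: "'a \<Rightarrow> nat" where
  "N_color y = (if y = xi then 0 else if y = xj then d - 1 else (e y + 1) mod (d - 2) + 1)"

definition color :: "'a \<Rightarrow> nat" where
  "color v =
    (if v = x then d
     else if v \<in> N then N_color v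
     else if v \<in> bunch xi then
       (if \<exists>t\<in>T. E v t then e (parent (SOME t. t \<in> T \<and> E v t)) + 1 else d - 1)
     else if v \<in> S then (if parent v = xj then d else if v \<in> T then d - 1 else e (parent v) + 1)
     else 0)"

lemma c_in_S: "c \<in> S" and parent_c: "parent c = xj"
  using c_in_bunch mem_bunch_iff[OF xj_in_N] by auto

lemma a0_in_S: "a0 \<in> S" and parent_a0: "parent a0 = xi"
  using a0_in_bunch mem_bunch_iff[OF xi_in_N] by auto

lemma mem_bunch_xi_iff: "a \<in> bunch xi \<longleftrightarrow> a \<in> S \<and> parent a = xi"
  using mem_bunch_iff[OF xi_in_N] .

lemma mem_D_iff: "y \<in> D \<longleftrightarrow> y \<in> N \<and> y \<noteq> xi \<and> y \<noteq> xj"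
  unfolding D_def by auto

lemma e_less: "y \<in> D \<Longrightarrow> e y < d - 2"
  using e_bij unfolding bij_betw_def D_def by auto

lemma e_inj: "y \<in> D \<Longrightarrow> y' \<in> D \<Longrightarrow> e y = e y' \<Longrightarrow> y = y'"
  using e_bij unfolding bij_betw_def inj_on_def D_def by blast

lemma e_surj: "m < d - 2 \<Longrightarrow> \<exists>y\<in>D. e y = m"
  using e_bij unfolding bij_betw_def D_def by (metis atLeastLessThan_iff imageE zero_le)

lemma finite_D: "finite D"
  unfolding D_def using finite_N by simp

lemma card_D: "card D = d - 2"
  unfolding D_def using finite_N xi_in_N xj_in_N xi_ne_xj card_N by (simp add: card_Diff_singleton)

lemma parent_in_D: "u \<in> S \<Longrightarrow> u \<notin> bunch xi \<Longrightarrow> parent u \<noteq> xj \<Longrightarrow> parent u \<in> D"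
  using mem_bunch_xi_iff parent_in_N mem_D_iff by auto

lemma bunch_xi_subset_S: "a \<in> bunch xi \<Longrightarrow> a \<in> S"
  using mem_bunch_xi_iff by simp

lemma adj_xi_bunch: "a \<in> bunch xi \<Longrightarrow> E xi a"
  using mem_bunch_xi_iff adj_parent by metis

lemma adj_c_T: "t \<in> T \<Longrightarrow> E c t" and T_ne: "t \<in> T \<Longrightarrow> t \<noteq> xj" "t \<in> T \<Longrightarrow> t \<noteq> a0"
  unfolding T_def by (auto simp: in_nbhd_iff)

lemma T_subset_S: assumes "t \<in> T" shows "t \<in> S"
proof -
  have "t \<notin> N"
  proof
    assume "t \<in> N"
    then show False
      using no_4_cycle[of x c xj t] assms adj_c_T T_ne mem_N_iff xj_in_N S_ne_root[OF c_in_S]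
        adj_parent[OF c_in_S] parent_c adj_sym by metis
  qed
  then show ?thesis using c_closed adj_c_T[OF assms] N2_eq by (auto simp: in_nbhd_iff)
qed

lemma parent_T_in_D: assumes "t \<in> T" shows "parent t \<in> D"
proof -
  have t: "t \<in> S" "E c t" "E (parent t) t" using assms T_subset_S adj_c_T adj_parent by auto
  have "parent t \<noteq> xj"
    using no_triangle[of xj c t] t adj_parent[OF c_in_S] parent_c by metis
  moreover have "parent t \<noteq> xi"
  proof
    assume "parent t = xi"
    moreover have "xi \<noteq> c" using N_not_S[OF xi_in_N] c_in_S by blast
    moreover have "E xi a0" using adj_parent[OF a0_in_S] parent_a0 by simp
    ultimately show False
      using no_4_cycle[of xi c t a0] t T_ne(2)[OF assms] adj_a0_c adj_sym by metis
  qed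
  ultimately show ?thesis using parent_in_N t(1) mem_D_iff by simp
qed

lemma T_disjoint_bunch_xi: "t \<in> T \<Longrightarrow> t \<notin> bunch xi"
  using parent_T_in_D mem_bunch_xi_iff mem_D_iff by fastforce

lemma T_independent: "t \<in> T \<Longrightarrow> t' \<in> T \<Longrightarrow> \<not> E t t'"
  using no_triangle[of c t t'] adj_c_T by blast

lemma parent_T_eq_D: "parent ` T = D"
proof -
  have "inj_on parent T"
  proof (rule inj_onI)
    fix t t' assume t: "t \<in> T" "t' \<in> T" "parent t = parent t'"
    have "c \<noteq> parent t" using N_not_S parent_in_N T_subset_S t(1) c_in_S by metis
    moreover have "E t (parent t)" "E t' (parent t)"
      using adj_parent T_subset_S t adj_sym by metis+
    ultimately show "t = t'" using no_4_cycle[of c "parent t" t t'] t adj_c_T by blast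
  qed
  moreover have "card T = d - 2"
  proof -
    have "xj \<in> nbhd V E c" "a0 \<in> nbhd V E c" "xj \<noteq> a0"
      using adj_parent[OF c_in_S] parent_c adj_a0_c adj_sym N_not_S[OF xj_in_N] a0_in_S
      by (auto simp: in_nbhd_iff)
    moreover have "card (nbhd V E c) = d" using card_nbhd c_in_S S_subset_V by blast
    ultimately show ?thesis unfolding T_def by (simp add: finite_nbhd card_Diff_singleton)
  qed
  ultimately have "card (parent ` T) = card D" using card_image card_D by metis
  moreover have "parent ` T \<subseteq> D" using parent_T_in_D by blast
  ultimately show ?thesis using card_subset_eq finite_D by blast
qed

lemma T_neighbor_unique:
  assumes "a \<in> bunch xi" "t \<in> T" "t' \<in> T" "E a t" "E a t'" shows "t = t'"
proof (rule ccontr)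
  assume "t \<noteq> t'"
  moreover have "a \<noteq> c" using assms(1) mem_bunch_xi_iff parent_c xi_ne_xj by auto
  ultimately show False using no_4_cycle[of a c t t'] assms adj_c_T adj_sym by blast
qed

lemma a0_no_T_neighbor: "t \<in> T \<Longrightarrow> \<not> E a0 t"
  using no_triangle[of a0 c t] adj_a0_c adj_c_T by blast

lemma color_root: "color x = d"
  unfolding color_def by simp

lemma color_N: "y \<in> N \<Longrightarrow> color y = N_color y"
  unfolding color_def using root_not_N by auto

lemma color_bunch_xi_T:
  assumes "a \<in> bunch xi" "t \<in> T" "E a t" shows "color a = e (parent t) + 1"
proof -
  have "(SOME t. t \<in> T \<and> E a t) \<in> T \<and> E a (SOME t. t \<in> T \<and> E a t)"
    by (rule someI_ex) (use assms in blast)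
  then have "(SOME t. t \<in> T \<and> E a t) = t" using T_neighbor_unique assms by blast
  moreover have "a \<noteq> x" "a \<notin> N" using assms(1) bunch_xi_subset_S S_ne_root N_not_S by blast+
  ultimately show ?thesis unfolding color_def using assms by auto
qed

lemma color_bunch_xi_no_T:
  assumes "a \<in> bunch xi" "\<forall>t\<in>T. \<not> E a t" shows "color a = d - 1"
proof -
  have "a \<noteq> x" "a \<notin> N" using assms(1) bunch_xi_subset_S S_ne_root N_not_S by blast+
  then show ?thesis unfolding color_def using assms by simp
qed

lemma color_S:
  assumes "u \<in> S" "u \<notin> bunch xi"
  shows "color u = (if parent u = xj then d else if u \<in> T then d - 1 else e (parent u) + 1)"
  unfolding color_def using assms N_not_S S_ne_root by auto

lemma color_bunch_xi_bounds:
  assumes "a \<in> bunch xi" shows "1 \<le> color a" "color a \<le> d - 1"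
proof -
  have "1 \<le> color a \<and> color a \<le> d - 1"
  proof (cases "\<exists>t\<in>T. E a t")
    case True
    then obtain t where "t \<in> T" "E a t" by blast
    then show ?thesis using color_bunch_xi_T[OF assms] e_less[OF parent_T_in_D] by fastforce
  qed (use color_bunch_xi_no_T[OF assms] d_ge_4 in auto)
  then show "1 \<le> color a" "color a \<le> d - 1" by auto
qed

lemma N_color_le: "N_color y \<le> d - 1"
proof -
  have "(e y + 1) mod (d - 2) < d - 2" using d_ge_4 by simp
  then show ?thesis unfolding N_color_def by auto
qed

lemma N_color_D:
  assumes "y \<in> D" shows "N_color y \<le> d - 2" "N_color y \<noteq> e y + 1"
proof -
  have y: "y \<noteq> xi" "y \<noteq> xj" "e y < d - 2" using assms mem_D_iff e_less by auto
  have "N_color y = (e y + 1) mod (d - 2) + 1" unfolding N_color_def using y by simp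
  moreover have "(e y + 1) mod (d - 2) < d - 2" using d_ge_4 by simp
  ultimately show "N_color y \<le> d - 2" by linarith
  show "N_color y \<noteq> e y + 1"
  proof (cases "e y + 1 < d - 2")
    case False
    then have "e y + 1 = d - 2" using y by simp
    then show ?thesis unfolding N_color_def using y d_ge_4 by simp
  qed (simp add: N_color_def y)
qed

lemma color_S_le: assumes "u \<in> S" "u \<notin> bunch xi" shows "color u \<le> d"
proof (cases "parent u = xj")
  case False
  then show ?thesis using e_less[OF parent_in_D[OF assms False]] color_S[OF assms] by auto
qed (use color_S[OF assms] in auto)

lemma color_ne_bunch_xi_S:
  assumes a: "a \<in> bunch xi" and v: "v \<in> S" "v \<notin> bunch xi" and av: "E a v"
  shows "color a \<noteq> color v"
proof (cases "parent v = xj")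
  case True
  then show ?thesis using color_S[OF v] color_bunch_xi_bounds[OF a] d_ge_4 by auto
next
  case False
  have p: "parent v \<in> D" using parent_in_D v False by blast
  show ?thesis
  proof (cases "v \<in> T")
    case True
    then show ?thesis
      using color_bunch_xi_T[OF a True av] color_S[OF v] False e_less[OF p] by simp
  next
    case v_not_T: False
    have cv: "color v = e (parent v) + 1" using color_S[OF v] v_not_T False by simp
    show ?thesis
    proof (cases "\<exists>t\<in>T. E a t")
      case True
      then obtain t where t: "t \<in> T" "E a t" by blast
      show ?thesis
      proof
        assume "color a = color v"
        then have "e (parent t) = e (parent v)" using color_bunch_xi_T[OF a t] cv by simp
        then have same: "parent t = parent v" using e_inj parent_T_in_D[OF t(1)] p by blast
        have "a \<noteq> parent v" using N_not_S parent_in_N v(1) bunch_xi_subset_S[OF a] by metis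
        moreover have "E t (parent v)" "E v (parent v)"
          using adj_parent T_subset_S[OF t(1)] v(1) same adj_sym by metis+
        ultimately show False using no_4_cycle[of a "parent v" t v] t v_not_T av by blast
      qed
    next
      case False
      then show ?thesis using color_bunch_xi_no_T[OF a] cv e_less[OF p] by simp
    qed
  qed
qed

lemma color_ne_S_S:
  assumes u: "u \<in> S" "u \<notin> bunch xi" and v: "v \<in> S" "v \<notin> bunch xi" and uv: "E u v"
  shows "color u \<noteq> color v"
proof -
  have parents_ne: "parent u \<noteq> parent v"
    using no_triangle[of "parent u" u v] adj_parent u(1) v(1) uv by metis
  consider "parent u = xj" | "parent v = xj" | "parent u \<in> D" "parent v \<in> D"
    using parent_in_D u v by blast
  then show ?thesis
  proof cases
    case 1
    then show ?thesis using color_S u v parents_ne e_less[OF parent_in_D[OF v]] d_ge_4 by auto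
  next
    case 2
    then show ?thesis using color_S u v parents_ne e_less[OF parent_in_D[OF u]] d_ge_4 by auto
  next
    case 3
    then have "color u = (if u \<in> T then d - 1 else e (parent u) + 1)"
      "color v = (if v \<in> T then d - 1 else e (parent v) + 1)"
      using color_S u v mem_D_iff by auto
    moreover have "e (parent u) < d - 2" "e (parent v) < d - 2" "e (parent u) \<noteq> e (parent v)"
      using e_less e_inj 3 parents_ne by blast+
    moreover have "\<not> (u \<in> T \<and> v \<in> T)" using T_independent uv by blast
    ultimately show ?thesis by (simp split: if_splits)
  qed
qed

lemma color_ne_N_S:
  assumes y: "y \<in> N" and v: "v \<in> S" and yv: "E y v" shows "color y \<noteq> color v"
proof -
  have pv: "parent v = y" using parent_eqI v y yv by blast
  consider "y = xi" | "y = xj" | "y \<in> D" using y mem_D_iff by blast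
  then show ?thesis
  proof cases
    case 1
    then have "v \<in> bunch xi" using mem_bunch_xi_iff v pv by simp
    then show ?thesis using color_bunch_xi_bounds color_N[OF y] 1 unfolding N_color_def by fastforce
  next
    case 2
    then show ?thesis
      using color_S[OF v] mem_bunch_xi_iff pv color_N[OF y] xi_ne_xj d_ge_4
      unfolding N_color_def by auto
  next
    case 3
    then have "v \<notin> bunch xi" using mem_bunch_xi_iff pv mem_D_iff by auto
    then have "color v = (if v \<in> T then d - 1 else e y + 1)"
      using color_S[OF v] pv 3 mem_D_iff by simp
    then show ?thesis using N_color_D[OF 3] color_N[OF y] d_ge_4 by auto
  qed
qed

definition ball2 :: "'a set" where "ball2 = insert x (N \<union> S)"

lemma ball2_subset_V: "ball2 \<subseteq> V"
  unfolding ball2_def using root_in_V N_subset_V S_subset_V by blast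

lemma color_less:
  assumes "v \<in> ball2" shows "color v < Suc d"
proof -
  consider "v = x" | "v \<in> N" | "v \<in> bunch xi" | "v \<in> S" "v \<notin> bunch xi"
    using assms unfolding ball2_def by blast
  then show ?thesis
  proof cases
    case 2
    then show ?thesis using color_N N_color_le[of v] by simp
  next
    case 3
    then show ?thesis using color_bunch_xi_bounds(2)[of v] by simp
  qed (use color_root color_S_le[of v] in simp_all)
qed

lemma color_proper:
  assumes "u \<in> ball2" "v \<in> ball2" "E u v" shows "color u \<noteq> color v"
proof -
  have oriented: "color u \<noteq> color v"
    if uv: "E u v" "v \<in> ball2"
      and "u = x \<or> u \<in> N \<and> v \<noteq> x \<or> u \<in> bunch xi \<and> v \<in> S
           \<or> u \<in> S - bunch xi \<and> v \<in> S - bunch xi" for u v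
    using that(3)
  proof (elim disjE conjE)
    assume "u = x"
    then have "v \<in> N" using uv(1) mem_N_iff by simp
    then show ?thesis
      using \<open>u = x\<close> color_N N_color_le[of v] color_root d_ge_4 by simp
  next
    assume "u \<in> N" "v \<noteq> x"
    moreover have "v \<notin> N" using no_triangle[of x u v] uv(1) mem_N_iff \<open>u \<in> N\<close> by blast
    ultimately show ?thesis using color_ne_N_S uv unfolding ball2_def by blast
  next
    assume "u \<in> bunch xi" "v \<in> S"
    then show ?thesis
      using color_ne_bunch_xi_S no_triangle[of xi u v] adj_xi_bunch uv(1) by blast
  next
    assume "u \<in> S - bunch xi" "v \<in> S - bunch xi"
    then show ?thesis using color_ne_S_S uv(1) by blast
  qed
  show ?thesis
  proof (cases "u = x \<or> u \<in> N \<and> v \<noteq> x \<or> u \<in> bunch xi \<and> v \<in> S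
                \<or> u \<in> S - bunch xi \<and> v \<in> S - bunch xi")
    case True
    then show ?thesis using oriented assms by blast
  next
    case False
    then have "v = x \<or> v \<in> N \<and> u \<noteq> x \<or> v \<in> bunch xi \<and> u \<in> S
               \<or> v \<in> S - bunch xi \<and> u \<in> S - bunch xi"
      using assms(1,2) S_ne_root bunch_xi_subset_S unfolding ball2_def by auto
    then show ?thesis using oriented[of v u] assms adj_sym by metis
  qed
qed

lemma color_bunch_xi_onto:
  assumes "1 \<le> j" "j \<le> d - 1" shows "\<exists>a\<in>bunch xi. color a = j"
proof (cases "j = d - 1")
  case True
  have "color a0 = d - 1" using color_bunch_xi_no_T[OF a0_in_bunch] a0_no_T_neighbor by blast
  then show ?thesis using True a0_in_bunch by blast
next
  case False
  then have "j - 1 < d - 2" using assms by linarith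
  then obtain y where y: "y \<in> D" "e y = j - 1" using e_surj by blast
  then obtain t where t: "t \<in> T" "parent t = y" using parent_T_eq_D by (metis imageE)
  have "parent t \<noteq> xi" using t y mem_D_iff by simp
  then obtain a where a: "a \<in> bunch xi" "E a t"
    using closed_bunch_dominates[OF xi_in_N bunch_xi_closed T_subset_S[OF t(1)]] by blast
  have "color a = j" using color_bunch_xi_T[OF a(1) t(1) a(2)] t(2) y(2) assms(1) by simp
  then show ?thesis using a(1) by blast
qed

lemma root_sees_all_colors:
  assumes "j < Suc d" shows "\<exists>u\<in>insert x (nbhd V E x). color u = j"
proof -
  consider "j = d" | "j = 0" | "j = d - 1" | "1 \<le> j" "j \<le> d - 2" using assms by linarith
  then show ?thesis
  proof cases
    case 1
    then show ?thesis using color_root by auto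
  next
    case 2
    then show ?thesis using color_N xi_in_N unfolding N_color_def N_def by auto
  next
    case 3
    then show ?thesis using color_N xj_in_N xi_ne_xj unfolding N_color_def N_def by auto
  next
    case 4
    define m where "m = (if j = 1 then d - 3 else j - 2)"
    have "m < d - 2" unfolding m_def using 4 d_ge_4 by auto
    then obtain y where y: "y \<in> D" "e y = m" using e_surj by blast
    have "(e y + 1) mod (d - 2) + 1 = j"
    proof (cases "j = 1")
      case True
      then have "e y + 1 = d - 2" using y d_ge_4 unfolding m_def by simp
      then show ?thesis using True by simp
    qed (use y 4 in \<open>auto simp: m_def\<close>)
    then have "color y = j"
      using color_N y(1) mem_D_iff unfolding N_color_def by auto
    then show ?thesis using y(1) mem_D_iff unfolding N_def by blast
  qed
qed

lemma xi_sees_all_colors: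
  assumes "j < Suc d" shows "\<exists>u\<in>insert xi (nbhd V E xi). color u = j"
proof -
  consider "j = d" | "j = 0" | "1 \<le> j" "j \<le> d - 1" using assms by linarith
  then show ?thesis
  proof cases
    case 1
    then show ?thesis using color_root xi_in_N mem_N_iff adj_sym by (auto simp: in_nbhd_iff)
  next
    case 2
    then show ?thesis using color_N xi_in_N unfolding N_color_def by auto
  next
    case 3
    then show ?thesis using color_bunch_xi_onto unfolding bunch_def by blast
  qed
qed

lemma bunch_xi_sees_all_colors:
  assumes a: "a \<in> bunch xi" and j: "j < Suc d"
  shows "\<exists>u\<in>insert a (nbhd V E a). color u = j"
proof -
  have aS: "a \<in> S" and pa: "parent a = xi" using a mem_bunch_xi_iff by auto
  have meets: "\<exists>u\<in>S. E a u \<and> parent u = y" if "y \<in> N" "y \<noteq> xi" for y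
    using closed_vertex_meets_bunch[OF aS] bunch_xi_closed a that pa by blast
  consider "j = color a" | "j = d" | "j = 0" | "j = d - 1" "j \<noteq> color a"
    | "1 \<le> j" "j \<le> d - 2" "j \<noteq> color a"
    using j by linarith
  then show ?thesis
  proof cases
    case 2
    obtain u where "u \<in> S" "E a u" "parent u = xj" using meets xj_in_N xi_ne_xj by metis
    moreover have "u \<notin> bunch xi" using calculation mem_bunch_xi_iff xi_ne_xj by auto
    ultimately have "color u = d" using color_S by simp
    then show ?thesis using \<open>E a u\<close> 2 by (auto simp: in_nbhd_iff)
  next
    case 3
    have "color xi = 0" using color_N[OF xi_in_N] by (simp add: N_color_def)
    moreover have "xi \<in> nbhd V E a" using adj_xi_bunch[OF a] adj_sym by (simp add: in_nbhd_iff)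
    ultimately show ?thesis using 3 by blast
  next
    case 4
    then obtain t where t: "t \<in> T" "E a t" using color_bunch_xi_no_T[OF a] by metis
    have "color t = d - 1"
      using color_S T_subset_S T_disjoint_bunch_xi parent_T_in_D mem_D_iff t(1) by auto
    then show ?thesis using t 4 by (auto simp: in_nbhd_iff)
  next
    case 5
    then have "j - 1 < d - 2" by linarith
    then obtain y where y: "y \<in> D" "e y = j - 1" using e_surj by blast
    then obtain u where u: "u \<in> S" "E a u" "parent u = y" using meets mem_D_iff by blast
    have "u \<notin> bunch xi" using u y mem_bunch_xi_iff mem_D_iff by auto
    show ?thesis
    proof (cases "u \<in> T")
      case True
      then show ?thesis using color_bunch_xi_T[OF a True u(2)] u y 5 by simp
    next
      case False
      then have "color u = j"
        using color_S[OF u(1) \<open>u \<notin> bunch xi\<close>] u y 5 mem_D_iff by auto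
      then show ?thesis using u by (auto simp: in_nbhd_iff)
    qed
  qed simp
qed

lemma closed_nbhd_subset_ball2:
  assumes "v = x \<or> v = xi \<or> v \<in> bunch xi" shows "insert v (nbhd V E v) \<subseteq> ball2"
proof -
  have "nbhd V E xi \<subseteq> insert x (bunch xi)" unfolding bunch_def by blast
  then have "nbhd V E xi \<subseteq> ball2" unfolding ball2_def using bunch_xi_subset_S by blast
  moreover have "nbhd V E a \<subseteq> ball2" if "a \<in> bunch xi" for a
    using bunch_xi_closed that N2_eq unfolding ball2_def by blast
  ultimately show ?thesis
    using assms xi_in_N bunch_xi_subset_S unfolding ball2_def N_def by blast
qed

theorem b_coloring_exists: "\<exists>col. b_coloring V E (Suc d) col"
proof -
  obtain col where col: "\<forall>v\<in>V. col v < Suc d" "\<forall>u\<in>V. \<forall>v\<in>V. E u v \<longrightarrow> col u \<noteq> col v"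
    and agrees: "\<forall>v\<in>ball2. col v = color v"
    using proper_coloring_extends[OF ball2_subset_V] color_less color_proper by blast
  have "\<exists>v\<in>V. col v = i \<and> (\<forall>j < Suc d. \<exists>u\<in>insert v (nbhd V E v). col u = j)"
    if "i < Suc d" for i
  proof -
    obtain v where v: "v = x \<or> v = xi \<or> v \<in> bunch xi" "color v = i"
    proof -
      consider "i = d" | "i = 0" | "1 \<le> i" "i \<le> d - 1" using \<open>i < Suc d\<close> by linarith
      then show ?thesis
      proof cases
        case 2
        then show ?thesis using that[of xi] color_N xi_in_N by (simp add: N_color_def)
      qed (use that color_root color_bunch_xi_onto in auto)
    qed
    have sub: "insert v (nbhd V E v) \<subseteq> ball2" using closed_nbhd_subset_ball2 v(1) .
    have "\<forall>j < Suc d. \<exists>u\<in>insert v (nbhd V E v). color u = j"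
      using v(1) root_sees_all_colors xi_sees_all_colors bunch_xi_sees_all_colors by blast
    then show ?thesis using sub agrees v(2) ball2_subset_V by (metis insertI1 subsetD)
  qed
  then show ?thesis unfolding b_coloring_def using col by blast
qed

end

theorem mainTheorem8:
  fixes V :: "'a set" and E :: "'a \<Rightarrow> 'a \<Rightarrow> bool" and d :: nat
  assumes "simple_graph V E"
    and "d \<ge> 7"
    and "regular V E d"
    and "girth V E = 5"
    and "x \<in> V" and "xi \<in> nbhd V E x" and "xj \<in> nbhd V E x" and "xi \<noteq> xj"
    and "\<forall>w \<in> (nbhd V E xi - {x}) \<union> (nbhd V E xj - {x}). nbhd V E w \<subseteq> N2 V E x"
  shows "b_chromatic V E = d + 1"
proof -
  interpret rooted_girth5_graph V E d x
    using assms(1,3,4,5) by unfold_locales simp_all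
  have xi: "xi \<in> N" and xj: "xj \<in> N" using assms(6,7) unfolding N_def .
  have closed: "\<forall>a\<in>bunch xi \<union> bunch xj. nbhd V E a \<subseteq> N2 V E x"
    using assms(9) unfolding bunch_def .
  have "bunch xj \<noteq> {}" using card_bunch[OF xj] assms(2) by auto
  then obtain c where c: "c \<in> bunch xj" by blast
  then have "c \<in> S" "parent c \<noteq> xi" using mem_bunch_iff[OF xj] assms(8) by auto
  then obtain a0 where a0: "a0 \<in> bunch xi" "E a0 c"
    using closed_bunch_dominates[OF xi] closed by blast
  have "card (N - {xi, xj}) = d - 2"
    using finite_N card_N xi xj assms(8) by (simp add: card_Diff_singleton)
  then obtain e where "bij_betw e (N - {xi, xj}) {0..<d - 2}"
    using ex_bij_betw_finite_nat finite_N by (metis finite_Diff)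
  then interpret b_coloring_construction V E d x xi xj c a0 e
    using assms(2,8) xi xj closed c a0 by unfold_locales auto
  obtain col where "b_coloring V E (Suc d) col" using b_coloring_exists by blast
  then show ?thesis using b_chromatic_eq_Suc by simp
qed

end
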